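(* Let $0<L,W<\infty$, $\tau=iW/L$, $N\in\mathbb{N}$, and let $R_N$ be any of $A_{N-1},B_N,B_N^\vee,C_N,C_N^\vee,BC_N,D_N$. For $\mathbf{z}=(z_1,\dots,z_N)\in\mathbb{C}^N$, $z_j=x_j+iy_j$, define $q(\mathbf{z})=q^{R_N}(\mathbf{z})=C^{R_N}(\mathbf{z})\,W^{R_N}(\mathbf{z}/L;\tau)$. Then for every $m=1,\dots,N$, $$q(\sigma_m(L)\mathbf{z})=\mathrm{sgn}_{(L)}\,q(\mathbf{z}),\qquad q(\sigma_m(iW)\mathbf{z})=\mathrm{sgn}_{(iW)}\,e^{-2\pi i\mathcal{N}x_m/L}\,q(\mathbf{z}),$$ where $\mathrm{sgn}_{(L)}=1$ for $R_N=A_{N-1}$ with $N$ odd, $B_N^\vee$, $C_N$, $D_N$, and $\mathrm{sgn}_{(L)}=-1$ for $R_N=A_{N-1}$ with $N$ even, $B_N$, $C_N^\vee$, $BC_N$; and $\mathrm{sgn}_{(iW)}=1$ for $R_N=A_{N-1},C_N,C_N^\vee,BC_N,D_N$, $\mathrm{sgn}_{(iW)}=-1$ for $R_N=B_N,B_N^\vee$.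
   Context: Jacobi theta functions: for $v\in\mathbb{C}$, $\tau$ with $\Im\tau>0$, $q_0=e^{\pi i\tau}$: $\vartheta_0(v;\tau)=\sum_{n\in\mathbb{Z}}(-1)^nq_0^{n^2}e^{2\pi inv}$, $\vartheta_1(v;\tau)=i\sum_{n\in\mathbb{Z}}(-1)^nq_0^{(n-1/2)^2}e^{(2n-1)\pi iv}$, $\vartheta_2(v;\tau)=\sum_{n\in\mathbb{Z}}q_0^{(n-1/2)^2}e^{(2n-1)\pi iv}$, $\vartheta_3(v;\tau)=\sum_{n\in\mathbb{Z}}q_0^{n^2}e^{2\pi inv}$. The integer $\mathcal{N}=\mathcal{N}^{R_N}$ is: $N$ for $A_{N-1}$; $2N-1$ for $B_N$; $2N$ for $B_N^\vee,C_N^\vee$; $2(N+1)$ for $C_N$; $2N+1$ for $BC_N$; $2(N-1)$ for $D_N$. Macdonald denominators, for $\boldsymbol\xi\in\mathbb{C}^N$, with $P(\boldsymbol\xi)=\prod_{1\le j<k\le N}\vartheta_1(\xi_k-\xi_j;\tau)\vartheta_1(\xi_k+\xi_j;\tau)$: $W^{A_{N-1}}=\prod_{j<k}\vartheta_1(\xi_k-\xi_j;\tau)$; $W^{B_N}=\prod_\ell\vartheta_1(\xi_\ell;\tau)P$; $W^{B_N^\vee}=\prod_\ell\vartheta_1(2\xi_\ell;2\tau)P$; $W^{C_N}=\prod_\ell\vartheta_1(2\xi_\ell;\tau)P$; $W^{C_N^\vee}=\prod_\ell\vartheta_1(\xi_\ell;\tau/2)P$; $W^{BC_N}=\prod_\ell\vartheta_1(\xi_\ell;\tau)\vartheta_0(2\xi_\ell;2\tau)P$;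 $W^{D_N}=P$. Let $s(N)=0$ if $N$ is even and $s(N)=3$ if $N$ is odd. Define $C^{A_{N-1}}(\mathbf{z})=\exp(-\frac{\pi\mathcal{N}}{LW}\sum_j y_j^2)\,\vartheta_{s(N)}(\sum_k z_k/L;\tau)$ and $C^{R_N}(\mathbf{z})=\exp(-\frac{\pi\mathcal{N}}{LW}\sum_j y_j^2)$ for the other six types. $\mathbf{z}/L=(z_1/L,\dots,z_N/L)$. The shift operator $\sigma_m(w)$ replaces $z_m$ by $z_m+w$ and leaves the other coordinates unchanged. *)

theory Defs
  imports "HOL-Analysis.Analysis"
begin

definition theta0 :: "complex \<Rightarrow> complex \<Rightarrow> complex" where
  "theta0 v t = (\<Sum>\<^sub>\<infinity>n::int. (-1) powi n * exp (pi * \<i> * t * (of_int n)^2)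
                    * exp (2 * pi * \<i> * of_int n * v))"

definition theta1 :: "complex \<Rightarrow> complex \<Rightarrow> complex" where
  "theta1 v t = \<i> * (\<Sum>\<^sub>\<infinity>n::int. (-1) powi n * exp (pi * \<i> * t * (of_int n - 1/2)^2)
                    * exp ((2 * of_int n - 1) * pi * \<i> * v))"

definition theta2 :: "complex \<Rightarrow> complex \<Rightarrow> complex" where
  "theta2 v t = (\<Sum>\<^sub>\<infinity>n::int. exp (pi * \<i> * t * (of_int n - 1/2)^2)
                    * exp ((2 * of_int n - 1) * pi * \<i> * v))"

definition theta3 :: "complex \<Rightarrow> complex \<Rightarrow> complex" where
  "theta3 v t = (\<Sum>\<^sub>\<infinity>n::int. exp (pi * \<i> * t * (of_int n)^2)
                    * exp (2 * pi * \<i> * of_int n * v))"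

datatype rtype = A | B | Bv | C | Cv | BC | D

fun calN :: "rtype \<Rightarrow> nat \<Rightarrow> int" where
  "calN A N = int N"
| "calN B N = 2 * int N - 1"
| "calN Bv N = 2 * int N"
| "calN Cv N = 2 * int N"
| "calN C N = 2 * (int N + 1)"
| "calN BC N = 2 * int N + 1"
| "calN D N = 2 * (int N - 1)"

text \<open>Vectors in C^N are functions nat => complex, with coordinates indexed by 1..N.\<close>

definition Pfun :: "nat \<Rightarrow> complex \<Rightarrow> (nat \<Rightarrow> complex) \<Rightarrow> complex" where
  "Pfun N t \<xi> = (\<Prod>j\<in>{1..N}. \<Prod>k\<in>{j<..N}.
                    theta1 (\<xi> k - \<xi> j) t * theta1 (\<xi> k + \<xi> j) t)"

fun macW :: "rtype \<Rightarrow> nat \<Rightarrow> complex \<Rightarrow> (nat \<Rightarrow> complex) \<Rightarrow> complex" where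
  "macW A N t \<xi> = (\<Prod>j\<in>{1..N}. \<Prod>k\<in>{j<..N}. theta1 (\<xi> k - \<xi> j) t)"
| "macW B N t \<xi> = (\<Prod>l\<in>{1..N}. theta1 (\<xi> l) t) * Pfun N t \<xi>"
| "macW Bv N t \<xi> = (\<Prod>l\<in>{1..N}. theta1 (2 * \<xi> l) (2 * t)) * Pfun N t \<xi>"
| "macW C N t \<xi> = (\<Prod>l\<in>{1..N}. theta1 (2 * \<xi> l) t) * Pfun N t \<xi>"
| "macW Cv N t \<xi> = (\<Prod>l\<in>{1..N}. theta1 (\<xi> l) (t / 2)) * Pfun N t \<xi>"
| "macW BC N t \<xi> = (\<Prod>l\<in>{1..N}. theta1 (\<xi> l) t * theta0 (2 * \<xi> l) (2 * t)) * Pfun N t \<xi>"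
| "macW D N t \<xi> = Pfun N t \<xi>"

definition theta_s :: "nat \<Rightarrow> complex \<Rightarrow> complex \<Rightarrow> complex" where
  "theta_s N v t = (if even N then theta0 v t else theta3 v t)"

definition Cfac :: "rtype \<Rightarrow> nat \<Rightarrow> real \<Rightarrow> real \<Rightarrow> (nat \<Rightarrow> complex) \<Rightarrow> complex" where
  "Cfac R N L W z =
     complex_of_real (exp (- pi * of_int (calN R N) / (L * W) * (\<Sum>j\<in>{1..N}. (Im (z j))^2)))
     * (if R = A then theta_s N ((\<Sum>k\<in>{1..N}. z k) / of_real L) (\<i> * of_real W / of_real L) else 1)"

definition qfun :: "rtype \<Rightarrow> nat \<Rightarrow> real \<Rightarrow> real \<Rightarrow> (nat \<Rightarrow> complex) \<Rightarrow> complex" where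
  "qfun R N L W z = Cfac R N L W z * macW R N (\<i> * of_real W / of_real L) (\<lambda>j. z j / of_real L)"

definition shift :: "nat \<Rightarrow> complex \<Rightarrow> (nat \<Rightarrow> complex) \<Rightarrow> (nat \<Rightarrow> complex)" where
  "shift m w z = z(m := z m + w)"

fun sgnL :: "rtype \<Rightarrow> nat \<Rightarrow> complex" where
  "sgnL A N = (if odd N then 1 else -1)"
| "sgnL B N = -1"
| "sgnL Bv N = 1"
| "sgnL C N = 1"
| "sgnL Cv N = -1"
| "sgnL BC N = -1"
| "sgnL D N = 1"

fun sgniW :: "rtype \<Rightarrow> complex" where
  "sgniW B = -1"
| "sgniW Bv = -1"
| "sgniW _ = 1"

end

theory Submission
  imports Defs
begin

(* With x = z/L and t = iW/L, q is the Gaussian in Im z times a holomorphic part in x, and the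
   two shifts of z_m become x_m -> x_m + 1 and x_m -> x_m + t.  Every theta function involved is a
   theta series with characteristic: under v -> v + 1 it changes by a sign, and under v -> v + t
   (complete the square and reindex n -> n + 1) by a sign times exp(-pi i t - 2 pi i v).  Counting
   the theta factors that contain x_m (weighted per coordinate, two for each pair in P, and
   theta_s of the sum for A_{N-1}), the holomorphic part picks up a sign times
   exp(-pi i t - 2 pi i x_m)^calN.  The change of the Gaussian cancels the modulus of this factor
   exactly, leaving the phase exp(-2 pi i calN Re z_m / L). *)

lemma prod_fun_upd_factor:
  fixes g :: "'b \<Rightarrow> 'a::comm_monoid_mult"
  assumes "finite S" "m \<in> S" "g y = c * g (x m)"
  shows "(\<Prod>l\<in>S. g ((x(m := y)) l)) = c * (\<Prod>l\<in>S. g (x l))"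
proof -
  have "(\<Prod>l\<in>S - {m}. g ((x(m := y)) l)) = (\<Prod>l\<in>S - {m}. g (x l))"
    by (rule prod.cong) auto
  then show ?thesis
    using assms by (simp add: prod.remove mult.assoc)
qed

lemma sum_fun_upd_diff:
  fixes g :: "'b \<Rightarrow> 'a::ab_group_add"
  assumes "finite S" "m \<in> S"
  shows "(\<Sum>l\<in>S. g ((x(m := y)) l)) = (\<Sum>l\<in>S. g (x l)) + (g y - g (x m))"
proof -
  have "(\<Sum>l\<in>S - {m}. g ((x(m := y)) l)) = (\<Sum>l\<in>S - {m}. g (x l))"
    by (rule sum.cong) auto
  then show ?thesis
    using assms by (simp add: sum.remove)
qed

lemma prod_pairs_containing:
  fixes h :: "nat \<Rightarrow> 'a::comm_monoid_mult"
  assumes m: "m \<in> {1..N}"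
  shows "(\<Prod>j\<in>{1..N}. \<Prod>k\<in>{j<..N}. if j = m then h k else if k = m then h j else 1)
       = (\<Prod>i\<in>{1..N} - {m}. h i)"
proof -
  have "(\<Prod>k\<in>{j<..N}. if j = m then h k else if k = m then h j else 1)
      = (if j < m then h j else 1) * (if j = m then \<Prod>k\<in>{m<..N}. h k else 1)"
    if "j \<in> {1..N}" for j
    using m that by (auto simp: prod.delta)
  then have "(\<Prod>j\<in>{1..N}. \<Prod>k\<in>{j<..N}. if j = m then h k else if k = m then h j else 1)
      = (\<Prod>j\<in>{1..N}. if j < m then h j else 1)
        * (\<Prod>j\<in>{1..N}. if j = m then \<Prod>k\<in>{m<..N}. h k else 1)"
    by (simp add: prod.distrib)
  also have "\<dots> = (\<Prod>i\<in>{1..<m}. h i) * (\<Prod>i\<in>{m<..N}. h i)"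
  proof -
    have "{1..N} \<inter> {j. j < m} = {1..<m}" using m by auto
    then show ?thesis using m by (simp add: prod.If_cases)
  qed
  also have "\<dots> = (\<Prod>i\<in>{1..N} - {m}. h i)"
  proof -
    have "{1..N} - {m} = {1..<m} \<union> {m<..N}" "{1..<m} \<inter> {m<..N} = {}"
      using m by auto
    then show ?thesis
      by (simp add: prod.union_disjoint)
  qed
  finally show ?thesis .
qed

lemma prod_pairs_fun_upd:
  fixes N :: nat and f :: "'b \<Rightarrow> 'b \<Rightarrow> 'a::comm_monoid_mult"
  assumes m: "m \<in> {1..N}"
    and left: "\<And>i. i \<in> {1..N} - {m} \<Longrightarrow> f (x i) y = h i * f (x i) (x m)"
    and right: "\<And>i. i \<in> {1..N} - {m} \<Longrightarrow> f y (x i) = h i * f (x m) (x i)"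
  shows "(\<Prod>j\<in>{1..N}. \<Prod>k\<in>{j<..N}. f ((x(m := y)) k) ((x(m := y)) j))
       = (\<Prod>i\<in>{1..N} - {m}. h i) * (\<Prod>j\<in>{1..N}. \<Prod>k\<in>{j<..N}. f (x k) (x j))"
proof -
  have "f ((x(m := y)) k) ((x(m := y)) j)
      = (if j = m then h k else if k = m then h j else 1) * f (x k) (x j)"
    if "j \<in> {1..N}" "k \<in> {j<..N}" for j k
  proof -
    have "j < k" "j \<in> {1..N}" "k \<in> {1..N}"
      using that by auto
    then show ?thesis
      using left[of k] right[of j] by auto
  qed
  then have "(\<Prod>j\<in>{1..N}. \<Prod>k\<in>{j<..N}. f ((x(m := y)) k) ((x(m := y)) j))
      = (\<Prod>j\<in>{1..N}. \<Prod>k\<in>{j<..N}. if j = m then h k else if k = m then h j else 1)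
        * (\<Prod>j\<in>{1..N}. \<Prod>k\<in>{j<..N}. f (x k) (x j))"
    by (simp add: prod.distrib)
  then show ?thesis
    by (simp only: prod_pairs_containing[OF m])
qed

definition theta_factor :: "complex \<Rightarrow> complex \<Rightarrow> complex" where
  "theta_factor t v = exp (- pi * \<i> * t - 2 * pi * \<i> * v)"

lemma theta_factor_power: "theta_factor t v ^ k = exp (of_nat k * (- pi * \<i> * t - 2 * pi * \<i> * v))"
  by (simp add: theta_factor_def exp_of_nat_mult)

lemma theta_factor_mult: "theta_factor t a * theta_factor t b = theta_factor t ((a + b) / 2) ^ 2"
proof -
  have "(- pi * \<i> * t - 2 * pi * \<i> * a) + (- pi * \<i> * t - 2 * pi * \<i> * b)
      = of_nat 2 * (- pi * \<i> * t - 2 * pi * \<i> * ((a + b) / 2))"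
    by (simp add: field_simps)
  then show ?thesis
    by (simp only: theta_factor_power) (simp only: theta_factor_def mult_exp_exp)
qed

lemma theta_factor_diff: "theta_factor t (a - b) = theta_factor t a * exp (2 * pi * \<i> * b)"
  by (simp add: theta_factor_def mult_exp_exp algebra_simps)

definition theta_series :: "complex \<Rightarrow> complex \<Rightarrow> complex \<Rightarrow> complex \<Rightarrow> complex" where
  "theta_series \<epsilon> a v t = (\<Sum>\<^sub>\<infinity>n::int. \<epsilon> powi n * exp (pi * \<i> * t * (of_int n + a)\<^sup>2)
                                 * exp (2 * pi * \<i> * (of_int n + a) * v))"

lemma theta_series_plus_1:
  "theta_series \<epsilon> a (v + 1) t = exp (2 * pi * \<i> * a) * theta_series \<epsilon> a v t"
proof -
  have "exp (2 * pi * \<i> * (of_int n + a) * (v + 1))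
      = exp (2 * pi * \<i> * a) * exp (2 * pi * \<i> * (of_int n + a) * v)" for n :: int
  proof -
    have "2 * pi * \<i> * (of_int n + a) * (v + 1)
        = 2 * pi * \<i> * a + 2 * pi * \<i> * (of_int n + a) * v + (2 * of_int n * pi) * \<i>"
      by (simp add: algebra_simps)
    then show ?thesis
      by (simp only: exp_add exp_integer_2pi[OF Ints_of_int]) simp
  qed
  then show ?thesis
    unfolding theta_series_def by (simp add: infsum_cmult_right'[symmetric] mult_ac)
qed

(* No convergence hypothesis on t is needed: the two infinite sums are related by a bijective
   reindexing and a constant factor, which also holds when they diverge (and both are 0). *)
lemma theta_series_plus_period:
  assumes "\<epsilon> \<noteq> 0"
  shows "theta_series \<epsilon> a (v + t) t = theta_factor t v / \<epsilon> * theta_series \<epsilon> a v t"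
proof -
  define f where "f n = \<epsilon> powi n * exp (pi * \<i> * t * (of_int n + a)\<^sup>2)
                          * exp (2 * pi * \<i> * (of_int n + a) * v)" for n :: int
  have "\<epsilon> powi n * exp (pi * \<i> * t * (of_int n + a)\<^sup>2)
          * exp (2 * pi * \<i> * (of_int n + a) * (v + t))
      = theta_factor t v / \<epsilon> * f (n + 1)" for n :: int
  proof -
    have "exp (pi * \<i> * t * (of_int n + a)\<^sup>2) * exp (2 * pi * \<i> * (of_int n + a) * (v + t))
        = theta_factor t v * (exp (pi * \<i> * t * (of_int (n + 1) + a)\<^sup>2)
                                * exp (2 * pi * \<i> * (of_int (n + 1) + a) * v))"
      unfolding theta_factor_def by (simp add: mult_exp_exp power2_eq_square algebra_simps)
    then show ?thesis
      using assms by (simp add: f_def power_int_add field_simps)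
  qed
  then have "theta_series \<epsilon> a (v + t) t = (\<Sum>\<^sub>\<infinity>n::int. theta_factor t v / \<epsilon> * f (n + 1))"
    unfolding theta_series_def by simp
  also have "\<dots> = theta_factor t v / \<epsilon> * (\<Sum>\<^sub>\<infinity>n::int. f (n + 1))"
    by (rule infsum_cmult_right')
  also have "(\<Sum>\<^sub>\<infinity>n::int. f (n + 1)) = (\<Sum>\<^sub>\<infinity>n::int. f n)"
    by (rule infsum_reindex_bij_betw) (auto simp: bij_betw_def inj_on_def image_iff intro!: exI[where x="_ - 1"])
  finally show ?thesis
    by (simp add: theta_series_def f_def)
qed

lemma theta1_eq_theta_series: "theta1 v t = \<i> * theta_series (- 1) (- 1 / 2) v t"
  unfolding theta1_def theta_series_def by (simp add: algebra_simps)

lemma theta0_eq_theta_series: "theta0 v t = theta_series (- 1) 0 v t"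
  unfolding theta0_def theta_series_def by (simp add: algebra_simps)

lemma theta3_eq_theta_series: "theta3 v t = theta_series 1 0 v t"
  unfolding theta3_def theta_series_def by (simp add: algebra_simps)

lemma theta1_plus_1: "theta1 (v + 1) t = - theta1 v t"
  by (simp add: theta1_eq_theta_series theta_series_plus_1 exp_minus)

lemma theta1_plus_period: "theta1 (v + t) t = - theta_factor t v * theta1 v t"
  by (simp add: theta1_eq_theta_series theta_series_plus_period)

lemma theta0_plus_1: "theta0 (v + 1) t = theta0 v t"
  by (simp add: theta0_eq_theta_series theta_series_plus_1)

lemma theta0_plus_period: "theta0 (v + t) t = - theta_factor t v * theta0 v t"
  by (simp add: theta0_eq_theta_series theta_series_plus_period)

lemma theta3_plus_1: "theta3 (v + 1) t = theta3 v t"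
  by (simp add: theta3_eq_theta_series theta_series_plus_1)

lemma theta3_plus_period: "theta3 (v + t) t = theta_factor t v * theta3 v t"
  by (simp add: theta3_eq_theta_series theta_series_plus_period)

lemma theta1_minus_1: "theta1 (v - 1) t = - theta1 v t"
  using theta1_plus_1[of "v - 1" t] by simp

lemma theta1_minus_period: "theta1 (v - t) t = - theta_factor t (- v) * theta1 v t"
proof -
  have "theta_factor t (- v) * theta_factor t (v - t) = 1"
    by (simp add: theta_factor_def mult_exp_exp algebra_simps)
  then show ?thesis
    using theta1_plus_period[of "v - t" t] by (simp add: algebra_simps)
qed

lemma Pfun_shift_1:
  assumes "m \<in> {1..N}"
  shows "Pfun N t (x(m := x m + 1)) = Pfun N t x"
proof -
  have "Pfun N t (x(m := x m + 1)) = (\<Prod>i\<in>{1..N} - {m}. 1) * Pfun N t x"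
    unfolding Pfun_def
  proof (rule prod_pairs_fun_upd[OF assms])
    fix i
    have "x i - (x m + 1) = (x i - x m) - 1" "x i + (x m + 1) = (x i + x m) + 1"
      "(x m + 1) - x i = (x m - x i) + 1" "(x m + 1) + x i = (x m + x i) + 1"
      by simp_all
    note args = this
    show "theta1 (x i - (x m + 1)) t * theta1 (x i + (x m + 1)) t
        = 1 * (theta1 (x i - x m) t * theta1 (x i + x m) t)"
      and "theta1 ((x m + 1) - x i) t * theta1 ((x m + 1) + x i) t
        = 1 * (theta1 (x m - x i) t * theta1 (x m + x i) t)"
      unfolding args theta1_plus_1 theta1_minus_1 by simp_all
  qed
  then show ?thesis
    by simp
qed

lemma Pfun_shift_period:
  assumes "m \<in> {1..N}"
  shows "Pfun N t (x(m := x m + t)) = theta_factor t (x m) ^ (2 * (N - 1)) * Pfun N t x"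
proof -
  have "Pfun N t (x(m := x m + t)) = (\<Prod>i\<in>{1..N} - {m}. theta_factor t (x m) ^ 2) * Pfun N t x"
    unfolding Pfun_def
  proof (rule prod_pairs_fun_upd[OF assms])
    fix i
    have "x i - (x m + t) = (x i - x m) - t" "x i + (x m + t) = (x i + x m) + t"
      "(x m + t) - x i = (x m - x i) + t" "(x m + t) + x i = (x m + x i) + t"
      by simp_all
    note args = this
    have factor: "theta_factor t (x m - x i) * theta_factor t (x i + x m) = theta_factor t (x m) ^ 2"
      by (simp add: theta_factor_mult)
    show "theta1 (x i - (x m + t)) t * theta1 (x i + (x m + t)) t
        = theta_factor t (x m) ^ 2 * (theta1 (x i - x m) t * theta1 (x i + x m) t)"
      and "theta1 ((x m + t) - x i) t * theta1 ((x m + t) + x i) t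
        = theta_factor t (x m) ^ 2 * (theta1 (x m - x i) t * theta1 (x m + x i) t)"
      unfolding args theta1_plus_period theta1_minus_period minus_diff_eq
      by (simp_all add: factor[symmetric] add.commute mult_ac)
  qed
  then show ?thesis
    using assms by (simp add: power_mult)
qed

lemma macW_A_shift_1:
  assumes "m \<in> {1..N}"
  shows "macW A N t (x(m := x m + 1)) = (- 1) ^ (N - 1) * macW A N t x"
proof -
  have "macW A N t (x(m := x m + 1)) = (\<Prod>i\<in>{1..N} - {m}. - 1) * macW A N t x"
    unfolding macW.simps
  proof (rule prod_pairs_fun_upd[OF assms])
    fix i
    have "x i - (x m + 1) = (x i - x m) - 1" "(x m + 1) - x i = (x m - x i) + 1"
      by simp_all
    note args = this
    show "theta1 (x i - (x m + 1)) t = - 1 * theta1 (x i - x m) t"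
      and "theta1 ((x m + 1) - x i) t = - 1 * theta1 (x m - x i) t"
      unfolding args theta1_plus_1 theta1_minus_1 by simp_all
  qed
  then show ?thesis
    using assms by simp
qed

lemma macW_A_shift_period:
  assumes "m \<in> {1..N}"
  shows "macW A N t (x(m := x m + t))
       = (\<Prod>i\<in>{1..N} - {m}. - theta_factor t (x m - x i)) * macW A N t x"
  unfolding macW.simps
proof (rule prod_pairs_fun_upd[OF assms])
  fix i
  have "x i - (x m + t) = (x i - x m) - t" "(x m + t) - x i = (x m - x i) + t"
    by simp_all
  note args = this
  show "theta1 (x i - (x m + t)) t = - theta_factor t (x m - x i) * theta1 (x i - x m) t"
    and "theta1 ((x m + t) - x i) t = - theta_factor t (x m - x i) * theta1 (x m - x i) t"
    unfolding args theta1_plus_period theta1_minus_period minus_diff_eq by simp_all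
qed

fun coord_factor :: "rtype \<Rightarrow> complex \<Rightarrow> complex \<Rightarrow> complex" where
  "coord_factor B t v = theta1 v t"
| "coord_factor Bv t v = theta1 (2 * v) (2 * t)"
| "coord_factor C t v = theta1 (2 * v) t"
| "coord_factor Cv t v = theta1 v (t / 2)"
| "coord_factor BC t v = theta1 v t * theta0 (2 * v) (2 * t)"
| "coord_factor A t v = 1"
| "coord_factor D t v = 1"

fun coord_weight :: "rtype \<Rightarrow> nat" where
  "coord_weight B = 1"
| "coord_weight Bv = 2"
| "coord_weight C = 4"
| "coord_weight Cv = 2"
| "coord_weight BC = 3"
| "coord_weight A = 0"
| "coord_weight D = 0"

lemma macW_eq_coord_factor:
  "R \<noteq> A \<Longrightarrow> macW R N t x = (\<Prod>l\<in>{1..N}. coord_factor R t (x l)) * Pfun N t x"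
  by (cases R) simp_all

lemma calN_eq_coord_weight:
  "R \<noteq> A \<Longrightarrow> N \<ge> 1 \<Longrightarrow> nat (calN R N) = coord_weight R + 2 * (N - 1)"
  by (cases R) auto

lemma coord_factor_plus_1:
  assumes "R \<noteq> A"
  shows "coord_factor R t (v + 1) = sgnL R N * coord_factor R t v"
proof -
  have double: "2 * (v + 1) = (2 * v + 1) + 1"
    by simp
  from assms show ?thesis
    by (cases R) (simp_all only: coord_factor.simps sgnL.simps double theta1_plus_1 theta0_plus_1, simp_all)
qed

lemma coord_factor_plus_period:
  "coord_factor R t (v + t) = sgniW R * theta_factor t v ^ coord_weight R * coord_factor R t v"
proof -
  have "theta1 (2 * v + 2 * t) t = theta_factor t v ^ 4 * theta1 (2 * v) t"
  proof -
    have "theta_factor t (2 * v + t) * theta_factor t (2 * v) = theta_factor t v ^ 4"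
      unfolding theta_factor_power by (simp add: theta_factor_def mult_exp_exp algebra_simps)
    then show ?thesis
      using theta1_plus_period[of "2 * v + t" t] theta1_plus_period[of "2 * v" t]
      by (simp add: add.assoc mult_ac)
  qed
  moreover have "theta1 (v + t) (t / 2) = theta_factor t v ^ 2 * theta1 v (t / 2)"
  proof -
    have "theta_factor (t / 2) (v + t / 2) * theta_factor (t / 2) v = theta_factor t v ^ 2"
      unfolding theta_factor_power by (simp add: theta_factor_def mult_exp_exp algebra_simps)
    then show ?thesis
      using theta1_plus_period[of "v + t / 2" "t / 2"] theta1_plus_period[of v "t / 2"]
      by (simp add: add.assoc mult_ac)
  qed
  moreover have "theta_factor (2 * t) (2 * v) = theta_factor t v ^ 2"
    unfolding theta_factor_power by (simp add: theta_factor_def algebra_simps)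
  ultimately show ?thesis
    by (cases R) (simp_all add: distrib_left theta1_plus_period theta0_plus_period power_numeral_reduce)
qed

lemma theta_s_plus_1: "theta_s N (v + 1) t = theta_s N v t"
  by (simp add: theta_s_def theta0_plus_1 theta3_plus_1)

lemma theta_s_plus_period: "theta_s N (v + t) t = (- 1) ^ Suc N * theta_factor t v * theta_s N v t"
  by (simp add: theta_s_def theta0_plus_period theta3_plus_period)

lemma theta_factor_sum_mult_prod_diff:
  assumes m: "m \<in> {1..N}"
  shows "theta_factor t (\<Sum>k\<in>{1..N}. x k) * (\<Prod>i\<in>{1..N} - {m}. theta_factor t (x m - x i))
       = theta_factor t (x m) ^ N"
proof -
  let ?s = "\<Sum>k\<in>{1..N}. x k" and ?u = "theta_factor t (x m)"
  have "(\<Prod>i\<in>{1..N} - {m}. exp (2 * pi * \<i> * x i)) = exp (2 * pi * \<i> * (?s - x m))"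
    using m by (simp add: exp_sum[symmetric] sum_distrib_left[symmetric] sum_diff1)
  then have "(\<Prod>i\<in>{1..N} - {m}. theta_factor t (x m - x i))
      = ?u ^ (N - 1) * exp (2 * pi * \<i> * (?s - x m))"
    using m by (simp only: theta_factor_diff prod.distrib) simp
  moreover have "theta_factor t ?s * exp (2 * pi * \<i> * (?s - x m)) = ?u"
    by (simp add: theta_factor_def mult_exp_exp algebra_simps)
  ultimately have "theta_factor t ?s * (\<Prod>i\<in>{1..N} - {m}. theta_factor t (x m - x i))
      = ?u ^ (N - 1) * ?u"
    by (metis mult.left_commute)
  also have "\<dots> = ?u ^ N"
    using m by (simp flip: power_Suc2)
  finally show ?thesis .
qed

definition qhol :: "rtype \<Rightarrow> nat \<Rightarrow> complex \<Rightarrow> (nat \<Rightarrow> complex) \<Rightarrow> complex" where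
  "qhol R N t x = (if R = A then theta_s N (\<Sum>k\<in>{1..N}. x k) t else 1) * macW R N t x"

lemma sgnL_A: "N \<ge> 1 \<Longrightarrow> sgnL A N = (- 1) ^ (N - 1)"
  by (cases N) auto

lemma qhol_A: "qhol A N t x = theta_s N (\<Sum>k\<in>{1..N}. x k) t * macW A N t x"
  by (simp add: qhol_def)

lemma qhol_eq_coord_factor:
  "R \<noteq> A \<Longrightarrow> qhol R N t x = (\<Prod>l\<in>{1..N}. coord_factor R t (x l)) * Pfun N t x"
  by (simp add: qhol_def macW_eq_coord_factor)

lemma qhol_shift_1:
  assumes m: "m \<in> {1..N}"
  shows "qhol R N t (x(m := x m + 1)) = sgnL R N * qhol R N t x"
proof (cases "R = A")
  case True
  have sum: "(\<Sum>k\<in>{1..N}. (x(m := x m + 1)) k) = (\<Sum>k\<in>{1..N}. x k) + 1"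
    using sum_fun_upd_diff[of "{1..N}" m "\<lambda>v. v" x] m by simp
  have "qhol A N t (x(m := x m + 1))
      = theta_s N ((\<Sum>k\<in>{1..N}. x k) + 1) t * ((- 1) ^ (N - 1) * macW A N t x)"
    by (simp only: qhol_A sum macW_A_shift_1[OF m])
  then show ?thesis
    using True m by (simp add: qhol_A theta_s_plus_1 sgnL_A del: macW.simps)
next
  case False
  have "(\<Prod>l\<in>{1..N}. coord_factor R t ((x(m := x m + 1)) l))
      = sgnL R N * (\<Prod>l\<in>{1..N}. coord_factor R t (x l))"
    using m False by (intro prod_fun_upd_factor) (simp_all add: coord_factor_plus_1)
  then show ?thesis
    by (simp only: qhol_eq_coord_factor[OF False] Pfun_shift_1[OF m] mult.assoc)
qed

lemma qhol_shift_period: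
  assumes m: "m \<in> {1..N}"
  shows "qhol R N t (x(m := x m + t)) = sgniW R * theta_factor t (x m) ^ nat (calN R N) * qhol R N t x"
proof (cases "R = A")
  case True
  let ?s = "\<Sum>k\<in>{1..N}. x k"
  have sum: "(\<Sum>k\<in>{1..N}. (x(m := x m + t)) k) = ?s + t"
    using sum_fun_upd_diff[of "{1..N}" m "\<lambda>v. v" x] m by simp
  have sign: "(- 1) ^ Suc N * (- 1) ^ (N - 1) = (1 :: complex)"
    using m by (cases N) simp_all
  have "qhol A N t (x(m := x m + t))
      = ((- 1) ^ Suc N * theta_factor t ?s * theta_s N ?s t)
        * ((\<Prod>i\<in>{1..N} - {m}. - theta_factor t (x m - x i)) * macW A N t x)"
    by (simp only: qhol_A sum theta_s_plus_period macW_A_shift_period[OF m])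
  also have "\<dots> = ((- 1) ^ Suc N * (- 1) ^ (N - 1))
        * (theta_factor t ?s * (\<Prod>i\<in>{1..N} - {m}. theta_factor t (x m - x i))) * qhol A N t x"
    using m by (simp add: prod_uminus qhol_A mult_ac del: macW.simps)
  also have "\<dots> = theta_factor t (x m) ^ N * qhol A N t x"
    by (simp only: sign theta_factor_sum_mult_prod_diff[OF m] mult_1_left)
  finally show ?thesis
    using True by simp
next
  case False
  have "(\<Prod>l\<in>{1..N}. coord_factor R t ((x(m := x m + t)) l))
      = sgniW R * theta_factor t (x m) ^ coord_weight R * (\<Prod>l\<in>{1..N}. coord_factor R t (x l))"
    using m by (intro prod_fun_upd_factor) (simp_all add: coord_factor_plus_period)
  moreover have "nat (calN R N) = coord_weight R + 2 * (N - 1)"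
    using False m by (simp add: calN_eq_coord_weight)
  ultimately show ?thesis
    by (simp only: qhol_eq_coord_factor[OF False] Pfun_shift_period[OF m] power_add mult_ac)
qed

definition gauss_factor :: "rtype \<Rightarrow> nat \<Rightarrow> real \<Rightarrow> real \<Rightarrow> (nat \<Rightarrow> complex) \<Rightarrow> complex" where
  "gauss_factor R N L W z =
     of_real (exp (- pi * of_int (calN R N) / (L * W) * (\<Sum>j\<in>{1..N}. (Im (z j))\<^sup>2)))"

lemma qfun_eq_gauss_factor_qhol:
  "qfun R N L W z
     = gauss_factor R N L W z * qhol R N (\<i> * of_real W / of_real L) (\<lambda>j. z j / of_real L)"
  unfolding qfun_def Cfac_def gauss_factor_def qhol_def sum_divide_distrib by simp

lemma qfun_shift_eq:
  assumes "L \<noteq> 0"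
  shows "qfun R N L W (shift m w z) = gauss_factor R N L W (shift m w z)
           * qhol R N (\<i> * of_real W / of_real L)
               ((\<lambda>j. z j / of_real L)(m := z m / of_real L + w / of_real L))"
proof -
  have "(\<lambda>j. shift m w z j / of_real L)
      = (\<lambda>j. z j / of_real L)(m := z m / of_real L + w / of_real L)"
    by (auto simp: shift_def add_divide_distrib)
  then show ?thesis
    by (simp only: qfun_eq_gauss_factor_qhol)
qed

lemma gauss_factor_shift_real: "gauss_factor R N L W (shift m (of_real a) z) = gauss_factor R N L W z"
proof -
  have "Im (shift m (of_real a) z j) = Im (z j)" for j
    by (simp add: shift_def)
  then show ?thesis
    by (simp add: gauss_factor_def)
qed

lemma gauss_factor_shift_imag:
  assumes "m \<in> {1..N}"
  shows "gauss_factor R N L W (shift m (\<i> * of_real W) z)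
       = of_real (exp (- pi * of_int (calN R N) / (L * W) * (2 * W * Im (z m) + W\<^sup>2)))
         * gauss_factor R N L W z"
proof -
  have "(\<Sum>j\<in>{1..N}. (Im (shift m (\<i> * of_real W) z j))\<^sup>2)
      = (\<Sum>j\<in>{1..N}. (Im (z j))\<^sup>2) + (2 * W * Im (z m) + W\<^sup>2)"
    using sum_fun_upd_diff[of "{1..N}" m "\<lambda>v. (Im v)\<^sup>2" z "z m + \<i> * of_real W"] assms
    by (simp add: shift_def power2_eq_square algebra_simps)
  then show ?thesis
    unfolding gauss_factor_def by (simp only: distrib_left exp_add of_real_mult mult.commute)
qed

lemma gauss_mult_theta_factor_power:
  fixes L W :: real and k :: nat and w :: complex
  assumes "L \<noteq> 0" "W \<noteq> 0"
  shows "of_real (exp (- pi * k / (L * W) * (2 * W * Im w + W\<^sup>2)))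
         * theta_factor (\<i> * of_real W / of_real L) (w / of_real L) ^ k
       = exp (- 2 * pi * \<i> * k * Re w / of_real L)"
proof -
  have w: "w = of_real (Re w) + \<i> * of_real (Im w)"
    by (simp add: complex_eq_iff)
  have "of_real (- pi * k / (L * W) * (2 * W * Im w + W\<^sup>2))
        + of_nat k * (- pi * \<i> * (\<i> * of_real W / of_real L) - 2 * pi * \<i> * (w / of_real L))
      = - 2 * pi * \<i> * k * Re w / of_real L"
    using assms by (subst w) (simp add: field_simps power2_eq_square)
  then show ?thesis
    by (simp only: theta_factor_power exp_of_real[symmetric] mult_exp_exp)
qed

lemma calN_nonneg: "N \<ge> 1 \<Longrightarrow> calN R N \<ge> 0"
  by (cases R) auto

lemma qfun_shift_real:
  assumes "L \<noteq> 0" "m \<in> {1..N}"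
  shows "qfun R N L W (shift m (of_real L) z) = sgnL R N * qfun R N L W z"
proof -
  define t where "t = \<i> * of_real W / (of_real L :: complex)"
  define x where "x = (\<lambda>j. z j / of_real L)"
  have qfun_z: "qfun R N L W z = gauss_factor R N L W z * qhol R N t x"
    unfolding qfun_eq_gauss_factor_qhol t_def x_def ..
  have "qfun R N L W (shift m (of_real L) z) = gauss_factor R N L W z * qhol R N t (x(m := x m + 1))"
    using assms(1) by (simp add: qfun_shift_eq gauss_factor_shift_real t_def x_def)
  then show ?thesis
    by (simp add: qhol_shift_1[OF assms(2)] qfun_z mult_ac)
qed

lemma qfun_shift_imag:
  assumes "0 < L" "0 < W" "m \<in> {1..N}"
  shows "qfun R N L W (shift m (\<i> * of_real W) z)
       = sgniW R * exp (- 2 * pi * \<i> * of_int (calN R N) * of_real (Re (z m)) / of_real L) * qfun R N L W z"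
proof -
  define t where "t = \<i> * of_real W / (of_real L :: complex)"
  define x where "x = (\<lambda>j. z j / of_real L)"
  have qfun_z: "qfun R N L W z = gauss_factor R N L W z * qhol R N t x"
    unfolding qfun_eq_gauss_factor_qhol t_def x_def ..
  obtain k where k: "calN R N = int k"
    using calN_nonneg[of N R] assms(3) nonneg_int_cases by fastforce
  have "qfun R N L W (shift m (\<i> * of_real W) z)
      = of_real (exp (- pi * k / (L * W) * (2 * W * Im (z m) + W\<^sup>2)))
        * gauss_factor R N L W z * qhol R N t (x(m := x m + t))"
    using assms(1) by (simp add: qfun_shift_eq gauss_factor_shift_imag[OF assms(3)] k t_def x_def)
  also have "\<dots> = sgniW R * (of_real (exp (- pi * k / (L * W) * (2 * W * Im (z m) + W\<^sup>2)))
        * theta_factor t (x m) ^ k) * qfun R N L W z"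
    by (simp add: qhol_shift_period[OF assms(3)] qfun_z k mult_ac)
  also have "\<dots> = sgniW R * exp (- 2 * pi * \<i> * of_int (calN R N) * of_real (Re (z m)) / of_real L)
        * qfun R N L W z"
    using gauss_mult_theta_factor_power[of L W k "z m"] assms(1,2) by (simp add: t_def x_def k)
  finally show ?thesis .
qed

theorem lemma2p1:
  fixes L W :: real and N m :: nat and R :: rtype and z :: "nat \<Rightarrow> complex"
  assumes "0 < L" and "0 < W" and "m \<in> {1..N}"
  shows "qfun R N L W (shift m (of_real L) z) = sgnL R N * qfun R N L W z
    \<and> qfun R N L W (shift m (\<i> * of_real W) z) =
           sgniW R * exp (- 2 * pi * \<i> * of_int (calN R N) * of_real (Re (z m)) / of_real L)
           * qfun R N L W z"
  using assms qfun_shift_real[of L m N R W z] qfun_shift_imag[of L W m N R z] by simp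

end
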